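(* Let $\gamma_\xi=(\{a,b,c\},\emptyset,\emptyset,\{(b,a,c)\})$ be the GES on three distinct events with no conflicts, no initial causes, and where the occurrence of $a$ adds $b$ as a cause of $c$. Then there is no extended bundle event structure (EBES) $\xi$ with $\mathrm{Traces}(\xi)=\mathrm{Traces}(\gamma_\xi)$.
   Context: GES: $\gamma=(E,\#,\to,\lhd)$ with $\#\subseteq E^2$ irreflexive symmetric, $\to\subseteq E^2$, $\lhd\subseteq E^3$ where $(c,m,t)\in\lhd$ means "$m$ adds $c$ as a cause of $t$", requiring $\neg(c\to t)$. $\mathrm{ic}(e)=\{e'\mid e'\to e\}$, $\mathrm{ac}(H,e)=\{e'\mid\exists a\in H.(e',a,e)\in\lhd\}$. For $t=e_1\cdots e_n$, $\overline{t_k}=\{e_1,\ldots,e_k\}$. GES traces: finite sequences of pairwise distinct events, pairwise not in conflict, with $\mathrm{ic}(e_i)\cup\mathrm{ac}(\overline{t_{i-1}},e_i)\subseteq\overline{t_{i-1}}$ for all $i$. EBES: $\xi=(E,\rightsquigarrow,\mapsto)$ with disabling relation $\rightsquigarrow\subseteq E^2$ and bundle relation $\mapsto\subseteq 2^E\times E$, satisfying stability: $X\mapsto e$ implies $e_1\rightsquigarrow e_2$ for all distinct $e_1,e_2\in X$. A trace of $\xi$ is a finite sequence $e_1\cdots e_n$ of pairwise distinct events of $E$ such that for all $i$: $X\mapsto e_i$ implies $X\cap\overline{t_{i-1}}\neq\emptyset$, and for all $j<i$: $\neg(e_i\rightsquigarrow e_j)$ (i.e. $x\rightsquigarrow y$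 means $y$ never precedes $x$). *)

theory Defs
  imports Main
begin

text \<open>A GES (E, #, ->, adds) with conflict # a set of pairs, initial causality -> a set
  of pairs, and adds a set of triples (c, m, t) meaning "m adds c as a cause of t".\<close>

definition is_GES :: "'a set \<Rightarrow> ('a \<times> 'a) set \<Rightarrow> ('a \<times> 'a) set \<Rightarrow> ('a \<times> 'a \<times> 'a) set \<Rightarrow> bool" where
  "is_GES E conf caus adds \<longleftrightarrow>
     conf \<subseteq> E \<times> E \<and> irrefl conf \<and> sym conf \<and>
     caus \<subseteq> E \<times> E \<and>
     adds \<subseteq> E \<times> E \<times> E \<and>
     (\<forall>c m t. (c, m, t) \<in> adds \<longrightarrow> (c, t) \<notin> caus)"

definition ges_ic :: "('a \<times> 'a) set \<Rightarrow> 'a \<Rightarrow> 'a set" where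
  "ges_ic caus e = {e'. (e', e) \<in> caus}"

definition ges_ac :: "('a \<times> 'a \<times> 'a) set \<Rightarrow> 'a set \<Rightarrow> 'a \<Rightarrow> 'a set" where
  "ges_ac adds H e = {e'. \<exists>x\<in>H. (e', x, e) \<in> adds}"

definition ges_traces :: "'a set \<Rightarrow> ('a \<times> 'a) set \<Rightarrow> ('a \<times> 'a) set \<Rightarrow> ('a \<times> 'a \<times> 'a) set \<Rightarrow> 'a list set" where
  "ges_traces E conf caus adds =
     {t. distinct t \<and> set t \<subseteq> E \<and>
         (\<forall>i<length t. \<forall>j<length t. (t ! i, t ! j) \<notin> conf) \<and>
         (\<forall>i<length t. ges_ic caus (t ! i) \<union> ges_ac adds (set (take i t)) (t ! i)
                          \<subseteq> set (take i t))}"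

text \<open>An EBES (E, disabling, bundles): disabling a set of pairs (x, y) meaning x ~> y,
  bundles a set of pairs (X, e) meaning X |-> e.\<close>

definition is_EBES :: "'a set \<Rightarrow> ('a \<times> 'a) set \<Rightarrow> ('a set \<times> 'a) set \<Rightarrow> bool" where
  "is_EBES E dis bun \<longleftrightarrow>
     dis \<subseteq> E \<times> E \<and>
     bun \<subseteq> Pow E \<times> E \<and>
     (\<forall>X e. (X, e) \<in> bun \<longrightarrow> (\<forall>e1\<in>X. \<forall>e2\<in>X. e1 \<noteq> e2 \<longrightarrow> (e1, e2) \<in> dis))"

definition ebes_traces :: "'a set \<Rightarrow> ('a \<times> 'a) set \<Rightarrow> ('a set \<times> 'a) set \<Rightarrow> 'a list set" where
  "ebes_traces E dis bun =
     {t. distinct t \<and> set t \<subseteq> E \<and>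
         (\<forall>i<length t.
             (\<forall>X. (X, t ! i) \<in> bun \<longrightarrow> X \<inter> set (take i t) \<noteq> {}) \<and>
             (\<forall>j<i. (t ! i, t ! j) \<notin> dis))}"

end

theory Submission
  imports Defs
begin

text \<open>Whether an event may extend an EBES trace depends only on the set of events already
  present (bundles) and on pairwise disabling. Since \<open>c\<close> alone is a trace, no bundle points
  at \<open>c\<close>; since \<open>a b c\<close> is a trace, \<open>c\<close> does not disable \<open>a\<close>. Hence \<open>a c\<close> would be an
  EBES trace, whereas in the GES \<open>c\<close> needs \<open>b\<close> once \<open>a\<close> has occurred.\<close>

lemma ebes_traces_snoc_iff:
  "xs @ [e] \<in> ebes_traces E dis bun \<longleftrightarrow>
     xs \<in> ebes_traces E dis bun \<and> e \<notin> set xs \<and> e \<in> E \<and>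
     (\<forall>X. (X, e) \<in> bun \<longrightarrow> X \<inter> set xs \<noteq> {}) \<and> (\<forall>x\<in>set xs. (e, x) \<notin> dis)"
  by (auto simp: ebes_traces_def nth_append less_Suc_eq in_set_conv_nth all_conj_distrib) (metis nth_mem)+

lemma ges_traces_snoc_iff:
  "xs @ [e] \<in> ges_traces E conf caus adds \<longleftrightarrow>
     xs \<in> ges_traces E conf caus adds \<and> e \<notin> set xs \<and> e \<in> E \<and>
     (\<forall>x\<in>insert e (set xs). (x, e) \<notin> conf \<and> (e, x) \<notin> conf) \<and>
     ges_ic caus e \<union> ges_ac adds (set xs) e \<subseteq> set xs"
  by (auto simp: ges_traces_def nth_append less_Suc_eq in_set_conv_nth all_conj_distrib) (metis nth_mem)+

lemma Nil_in_ges_traces: "[] \<in> ges_traces E conf caus adds"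
  by (simp add: ges_traces_def)

lemma ebes_trace_snoc_singleton:
  assumes "[e] \<in> ebes_traces E dis bun" and "xs \<in> ebes_traces E dis bun"
    and "e \<notin> set xs" and "\<forall>x\<in>set xs. (e, x) \<notin> dis"
  shows "xs @ [e] \<in> ebes_traces E dis bun"
  using assms ebes_traces_snoc_iff[of "[]" e] ebes_traces_snoc_iff[of xs e] by auto

theorem lemma12:
  fixes a b c :: 'a
  assumes "a \<noteq> b" and "a \<noteq> c" and "b \<noteq> c"
  shows "\<not> (\<exists>E dis bun. is_EBES E dis bun \<and>
              ebes_traces E dis bun = ges_traces {a, b, c} {} {} {(b, a, c)})"
proof
  assume "\<exists>E dis bun. is_EBES E dis bun \<and>
              ebes_traces E dis bun = ges_traces {a, b, c} {} {} {(b, a, c)}"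
  then obtain E dis bun where eq: "ebes_traces E dis bun = ges_traces {a, b, c} {} {} {(b, a, c)}"
    by blast
  let ?T = "ges_traces {a, b, c} {} {} {(b, a, c)}"
  have "[c] \<in> ?T" and "[a, b, c] \<in> ?T" and "[a, c] \<notin> ?T"
    using assms Nil_in_ges_traces ges_traces_snoc_iff[of "[]" c] ges_traces_snoc_iff[of "[a, b]" c]
      ges_traces_snoc_iff[of "[a]" b] ges_traces_snoc_iff[of "[]" a] ges_traces_snoc_iff[of "[a]" c]
    by (auto simp: ges_ic_def ges_ac_def)
  then have c: "[c] \<in> ebes_traces E dis bun" and abc: "[a, b, c] \<in> ebes_traces E dis bun"
    and ac: "[a, c] \<notin> ebes_traces E dis bun"
    using eq by simp_all
  from abc have "[a] \<in> ebes_traces E dis bun" and "(c, a) \<notin> dis"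
    using ebes_traces_snoc_iff[of "[a, b]" c] ebes_traces_snoc_iff[of "[a]" b] by auto
  then have "[a, c] \<in> ebes_traces E dis bun"
    using ebes_trace_snoc_singleton[OF c, of "[a]"] assms by simp
  with ac show False ..
qed

end
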